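(* Let $n\ge 1$. For $0<h<1$ let $\mathcal{T}(h)=h^{2}\sum_{\vec{j}\in\mathbb{Z}^n}h^n\delta_{h\vec{j}}$ (a measure on $\mathbb{R}^n$) and $\mathcal{S}(h)=\sum_{\vec{k}\in\mathbb{Z}^n}\sum_{\{\vec{j}\in\mathbb{Z}^n:\,|\vec{j}-\vec{k}|=1\}}h^n\,\delta_{(h\vec{k},h\vec{j})}$ (a measure on $\mathbb{R}^n\times\mathbb{R}^n$). Let $\Phi\in\mathscr{C}^2(\mathbb{R}^n\times\mathbb{R}^n)$ with $\Phi(x,x)=0$ for all $x\in\mathbb{R}^n$. For each $h$, let $\psi_h:h\mathbb{Z}^n\to\mathbb{R}$ be the function satisfying $$\int_{\mathbb{R}^n}\varphi\,\psi_h\,d\mathcal{T}(h)=\iint_{\mathbb{R}^n\times\mathbb{R}^n}\varphi(x)\Phi(x,y)\,d\mathcal{S}(h)(x,y)\quad\text{for all }\varphi\in\mathscr{C}_c(\mathbb{R}^n),$$ and set $\mathcal{Q}(\Phi,h)(x)=\sum_{\vec{k}\in\mathbb{Z}^n}\psi_h(h\vec{k})\,\mathcal{X}_{Q(h\vec{k})}(x)$, where $Q(h\vec{k})=\prod_{m=1}^n[hk_m,h(k_m+1))$. Then for every $\varphi\in\mathscr{C}_c(\mathbb{R}^n)$, $$\lim_{h\to 0^+}\int_{\mathbb{R}^n}\mathcal{Q}(\Phi,h)(x)\varphi(x)\,dx=\int_{\mathbb{R}^n}\Delta_y\Phi(x,x)\,\varphi(x)\,dx,$$ i.e. $\frac{d\mathcal{S}}{d\mathcal{T}}(\Phi)=\Delta_y\Phi(x,x)$.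 Moreover, for $f\in\mathscr{C}^2(\mathbb{R}^n)$ and $\Phi(x,y)=f(y)-f(x)$, $\frac{d\mathcal{S}}{d\mathcal{T}}(\Phi)=\Delta f$.
   Context: $\Delta_y\Phi(x,x)$ denotes $\sum_{i=1}^n\frac{\partial^2\Phi}{\partial y_i^2}$ evaluated at $(x,x)$; $\Delta f=\sum_i\partial^2 f/\partial x_i^2$. $\delta_p$ is the unit point mass at $p$. The derivative $\frac{d\mathcal{S}}{d\mathcal{T}}(\Phi)$ is defined as the limit, as $h\to0^+$, of the quotients $\mathcal{Q}(\Phi,h)$ (the Kirchhoff divergence $\psi_h$ of $\Phi$ with respect to $\mathcal{T}(h),\mathcal{S}(h)$, extended as a piecewise constant function on the cubes $Q(h\vec{k})$), the limit being taken in the sense of distributions, i.e. tested against $\varphi\in\mathscr{C}_c(\mathbb{R}^n)$ with Lebesgue measure; the limit is identified with a function $g$ when $\int \mathcal{Q}(\Phi,h)\varphi\,dx\to\int g\varphi\,dx$ for all such $\varphi$. *)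

theory Defs
  imports "HOL-Analysis.Analysis"
begin

definition lat :: "real \<Rightarrow> int^'n \<Rightarrow> real^'n" where
  "lat h k = (\<chi> i. h * of_int (k $ i))"

definition nbr :: "int^'n \<Rightarrow> int^'n \<Rightarrow> bool" where
  "nbr j k \<longleftrightarrow> norm ((\<chi> i. real_of_int (j $ i - k $ i)) :: real^'n) = 1"

definition cube :: "real \<Rightarrow> int^'n \<Rightarrow> (real^'n) set" where
  "cube h k = {x. \<forall>i. h * of_int (k $ i) \<le> x $ i \<and> x $ i < h * (of_int (k $ i) + 1)}"

definition Cc :: "(real^'n \<Rightarrow> real) \<Rightarrow> bool" where
  "Cc \<phi> \<longleftrightarrow> continuous_on UNIV \<phi> \<and> (\<exists>K. compact K \<and> (\<forall>x. x \<notin> K \<longrightarrow> \<phi> x = 0))"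

definition C2 :: "('a::euclidean_space \<Rightarrow> real) \<Rightarrow> bool" where
  "C2 f \<longleftrightarrow> (\<exists>(f' :: 'a \<Rightarrow> 'a \<Rightarrow>\<^sub>L real) (f'' :: 'a \<Rightarrow> 'a \<Rightarrow>\<^sub>L ('a \<Rightarrow>\<^sub>L real)).
      (\<forall>x. (f has_derivative blinfun_apply (f' x)) (at x)) \<and>
      (\<forall>x. (f' has_derivative blinfun_apply (f'' x)) (at x)) \<and>
      continuous_on UNIV f'')"

text \<open>psi (a function on hZ^n, indexed by k in Z^n) is the Kirchhoff divergence of Phi
  w.r.t. T(h) = h^2 sum_j h^n delta_{hj} and S(h) = sum_k sum_{|j-k|=1} h^n delta_{(hk,hj)}:
  the integrals against these discrete measures are written out as the corresponding sums.\<close>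
definition kirchhoff_div :: "real \<Rightarrow> ((real^'n) \<times> (real^'n) \<Rightarrow> real) \<Rightarrow> (int^'n \<Rightarrow> real) \<Rightarrow> bool" where
  "kirchhoff_div h \<Phi> \<psi> \<longleftrightarrow>
     (\<forall>\<phi>. Cc \<phi> \<longrightarrow>
        (\<Sum>\<^sub>\<infinity>j. h^2 * h^CARD('n) * (\<phi> (lat h j) * \<psi> j)) =
        (\<Sum>\<^sub>\<infinity>k. (\<Sum>j\<in>{j. nbr j k}. h^CARD('n) * (\<phi> (lat h k) * \<Phi> (lat h k, lat h j)))))"

definition Qfun :: "real \<Rightarrow> (int^'n \<Rightarrow> real) \<Rightarrow> real^'n \<Rightarrow> real" where
  "Qfun h \<psi> x = (\<Sum>\<^sub>\<infinity>k. \<psi> k * indicator (cube h k) x)"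

definition lap_y :: "((real^'n) \<times> (real^'n) \<Rightarrow> real) \<Rightarrow> real^'n \<Rightarrow> real" where
  "lap_y \<Phi> x = (\<Sum>i\<in>UNIV. (deriv ^^ 2) (\<lambda>t. \<Phi> (x, x + t *\<^sub>R axis i 1)) 0)"

definition lap :: "(real^'n \<Rightarrow> real) \<Rightarrow> real^'n \<Rightarrow> real" where
  "lap f x = (\<Sum>i\<in>UNIV. (deriv ^^ 2) (\<lambda>t. f (x + t *\<^sub>R axis i 1)) 0)"

end

theory Submission
  imports Defs
begin

text \<open>Testing the defining identity of the Kirchhoff divergence against a continuous bump that
  equals 1 at \<open>h k\<close> and vanishes at every other lattice point shows that \<open>\<psi>\<^sub>h(h k)\<close> is the
  central second difference quotient
  \<open>h\<^sup>-\<^sup>2 \<Sum>\<^sub>i (\<Phi>(h k, h k + h e\<^sub>i) + \<Phi>(h k, h k - h e\<^sub>i))\<close> in the variable \<open>y\<close>.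
  Hence \<open>\<Q>(\<Phi>,h)(x)\<close> is this quotient at the lower corner of the cube containing \<open>x\<close>. Since
  \<open>\<Phi>(p,p) = 0\<close>, Taylor's theorem writes each summand as an average of two values of
  \<open>\<partial>\<^sup>2\<Phi>/\<partial>y\<^sub>i\<^sup>2\<close> at points within \<open>O(h)\<close> of \<open>(x,x)\<close>, so the quotients converge to
  \<open>\<Delta>\<^sub>y\<Phi>(x,x)\<close> uniformly on compact sets, and their integrals against a test function converge.
  For \<open>\<Phi>(x,y) = f y - f x\<close> one has \<open>\<Delta>\<^sub>y\<Phi>(x,x) = \<Delta>f(x)\<close>.\<close>

section \<open>Lattice neighbours and the Kirchhoff divergence\<close>

lemma int_sum_squares_eq_1_iff:
  fixes d :: "'n::finite \<Rightarrow> int"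
  shows "(\<Sum>i\<in>UNIV. (d i)\<^sup>2) = 1 \<longleftrightarrow> (\<exists>i. (d i = 1 \<or> d i = -1) \<and> (\<forall>m. m \<noteq> i \<longrightarrow> d m = 0))"
proof
  assume sum1: "(\<Sum>i\<in>UNIV. (d i)\<^sup>2) = 1"
  obtain i where "d i \<noteq> 0"
    using sum1 by (metis (mono_tags) sum.neutral zero_power2 zero_neq_one)
  then have ge1: "(d i)\<^sup>2 \<ge> 1"
    by (simp add: int_one_le_iff_zero_less)
  have split: "(\<Sum>i\<in>UNIV. (d i)\<^sup>2) = (d i)\<^sup>2 + (\<Sum>m\<in>UNIV-{i}. (d m)\<^sup>2)"
    by (simp add: sum.remove)
  have rest: "(\<Sum>m\<in>UNIV-{i}. (d m)\<^sup>2) \<ge> 0"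
    by (simp add: sum_nonneg)
  have "(d i)\<^sup>2 = 1"
    using sum1 split ge1 rest by linarith
  moreover have "(\<Sum>m\<in>UNIV-{i}. (d m)\<^sup>2) = 0"
    using sum1 split ge1 rest by linarith
  then have "\<forall>m. m \<noteq> i \<longrightarrow> d m = 0"
    using sum_nonneg_eq_0_iff[of "UNIV-{i}" "\<lambda>m. (d m)\<^sup>2"] by simp
  ultimately show "\<exists>i. (d i = 1 \<or> d i = -1) \<and> (\<forall>m. m \<noteq> i \<longrightarrow> d m = 0)"
    using power2_eq_1_iff by blast
next
  assume "\<exists>i. (d i = 1 \<or> d i = -1) \<and> (\<forall>m. m \<noteq> i \<longrightarrow> d m = 0)"
  then obtain i where unit: "d i = 1 \<or> d i = -1" and zero: "\<forall>m. m \<noteq> i \<longrightarrow> d m = 0"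
    by blast
  have "(\<Sum>i\<in>UNIV. (d i)\<^sup>2) = (d i)\<^sup>2 + (\<Sum>m\<in>UNIV-{i}. (d m)\<^sup>2)"
    by (simp add: sum.remove)
  then show "(\<Sum>i\<in>UNIV. (d i)\<^sup>2) = 1"
    using unit zero by auto
qed

lemma nbr_iff: "nbr j k \<longleftrightarrow> (\<exists>i. j = k + axis i 1 \<or> j = k - axis i 1)"
proof -
  have "nbr j k \<longleftrightarrow> (\<Sum>i\<in>UNIV. (real_of_int (j$i - k$i))\<^sup>2) = 1"
    unfolding nbr_def norm_vec_def L2_set_def by simp
  also have "\<dots> \<longleftrightarrow> (\<Sum>i\<in>UNIV. (j$i - k$i)\<^sup>2) = (1::int)"
    by (metis (mono_tags, lifting) of_int_eq_1_iff of_int_power of_int_sum sum.cong)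
  also have "\<dots> \<longleftrightarrow> (\<exists>i. (j$i - k$i = 1 \<or> j$i - k$i = -1) \<and> (\<forall>m. m \<noteq> i \<longrightarrow> j$m - k$m = 0))"
    by (rule int_sum_squares_eq_1_iff)
  also have "\<dots> \<longleftrightarrow> (\<exists>i. j = k + axis i 1 \<or> j = k - axis i 1)"
    by (rule ex_cong1) (auto simp: vec_eq_iff axis_def)
  finally show ?thesis .
qed

lemma sum_nbr:
  fixes G :: "int^'n \<Rightarrow> 'a::comm_monoid_add"
  shows "(\<Sum>j\<in>{j. nbr j k}. G j) = (\<Sum>i\<in>UNIV. G (k + axis i 1) + G (k - axis i 1))"
proof -
  have nbrs: "{j. nbr j k} = range (\<lambda>i. k + axis i 1) \<union> range (\<lambda>i. k - axis i 1)"
    by (auto simp: nbr_iff)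
  have disjoint: "range (\<lambda>i. k + axis i 1) \<inter> range (\<lambda>i. k - axis i 1) = {}"
  proof (rule ccontr)
    assume "\<not> ?thesis"
    then obtain i m where "k + axis i 1 = k - axis m (1::int)"
      by auto
    then have "(k + axis i 1) $ i = (k - axis m (1::int)) $ i"
      by simp
    then show False
      by (auto simp: axis_def split: if_splits)
  qed
  have inj_plus: "inj (\<lambda>i. k + axis i (1::int))" and inj_minus: "inj (\<lambda>i. k - axis i (1::int))"
    by (auto simp: inj_def axis_eq_axis)
  have "(\<Sum>j\<in>{j. nbr j k}. G j)
      = (\<Sum>j\<in>range (\<lambda>i. k + axis i 1). G j) + (\<Sum>j\<in>range (\<lambda>i. k - axis i 1). G j)"
    unfolding nbrs by (rule sum.union_disjoint) (use disjoint in auto)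
  also have "\<dots> = (\<Sum>i\<in>UNIV. G (k + axis i 1)) + (\<Sum>i\<in>UNIV. G (k - axis i 1))"
    by (simp add: sum.reindex[OF inj_plus] sum.reindex[OF inj_minus])
  finally show ?thesis
    by (simp add: sum.distrib)
qed

lemma lat_add_axis: "lat h (k + axis i 1) = lat h k + h *\<^sub>R axis i 1"
  and lat_diff_axis: "lat h (k - axis i 1) = lat h k - h *\<^sub>R axis i 1"
  by (auto simp: lat_def vec_eq_iff axis_def algebra_simps)

lemma norm_lat_diff_ge:
  assumes "0 < h" "j \<noteq> k"
  shows "h \<le> norm (lat h j - lat h k)"
proof -
  obtain i where "j$i \<noteq> k$i"
    using assms(2) by (auto simp: vec_eq_iff)
  then have "1 \<le> \<bar>real_of_int (j$i - k$i)\<bar>"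
    by linarith
  then have "h \<le> h * \<bar>real_of_int (j$i - k$i)\<bar>"
    using assms(1) by (metis mult.right_neutral mult_left_mono less_le)
  also have "\<dots> = \<bar>(lat h j - lat h k) $ i\<bar>"
    using assms(1) by (simp add: lat_def abs_mult right_diff_distrib[symmetric])
  also have "\<dots> \<le> norm (lat h j - lat h k)"
    by (rule component_le_norm_cart)
  finally show ?thesis .
qed

lemma lattice_bump:
  fixes k :: "int^'n"
  assumes "0 < h"
  obtains \<phi> :: "real^'n \<Rightarrow> real" where "Cc \<phi>" "\<And>j. \<phi> (lat h j) = (if j = k then 1 else 0)"
proof
  define \<phi> :: "real^'n \<Rightarrow> real" where "\<phi> x = max 0 (1 - 2 * norm (x - lat h k) / h)" for x
  have vanish: "\<phi> x = 0" if "h/2 \<le> norm (x - lat h k)" for x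
    using that assms by (simp add: \<phi>_def field_simps)
  show "Cc \<phi>"
    unfolding Cc_def
  proof
    show "continuous_on UNIV \<phi>"
      unfolding \<phi>_def by (intro continuous_intros) (use assms in auto)
    show "\<exists>K. compact K \<and> (\<forall>x. x \<notin> K \<longrightarrow> \<phi> x = 0)"
      by (intro exI[of _ "cball (lat h k) (h/2)"])
         (auto intro: vanish simp: dist_norm norm_minus_commute)
  qed
  show "\<phi> (lat h j) = (if j = k then 1 else 0)" for j
    using vanish[of "lat h j"] norm_lat_diff_ge[OF assms, of j k] assms
    by (auto simp: \<phi>_def)
qed

lemma infsum_eq_single:
  fixes g :: "'a \<Rightarrow> 'b::{comm_monoid_add, t2_space}"
  assumes "\<And>x. x \<noteq> a \<Longrightarrow> g x = 0"
  shows "(\<Sum>\<^sub>\<infinity>x. g x) = g a"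
proof -
  have "(\<Sum>\<^sub>\<infinity>x. g x) = (\<Sum>\<^sub>\<infinity>x\<in>{a}. g x)"
    by (rule infsum_cong_neutral) (use assms in auto)
  then show ?thesis
    by simp
qed

definition disc_lap_y :: "((real^'n) \<times> (real^'n) \<Rightarrow> real) \<Rightarrow> real \<Rightarrow> real^'n \<Rightarrow> real" where
  "disc_lap_y \<Phi> h p = (\<Sum>i\<in>UNIV. \<Phi> (p, p + h *\<^sub>R axis i 1) + \<Phi> (p, p - h *\<^sub>R axis i 1)) / h\<^sup>2"

lemma kirchhoff_div_eq_disc_lap_y:
  fixes \<Phi> :: "(real^'n) \<times> (real^'n) \<Rightarrow> real"
  assumes h: "0 < h" and div: "kirchhoff_div h \<Phi> \<psi>"
  shows "\<psi> k = disc_lap_y \<Phi> h (lat h k)"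
proof -
  obtain \<phi> where "Cc \<phi>" and bump: "\<And>j. \<phi> (lat h j) = (if j = k then 1 else 0)"
    using lattice_bump[OF h] by blast
  then have "(\<Sum>\<^sub>\<infinity>j. h\<^sup>2 * h^CARD('n) * (\<phi> (lat h j) * \<psi> j)) =
        (\<Sum>\<^sub>\<infinity>k. (\<Sum>j\<in>{j. nbr j k}. h^CARD('n) * (\<phi> (lat h k) * \<Phi> (lat h k, lat h j))))"
    using div unfolding kirchhoff_div_def by blast
  also have "(\<Sum>\<^sub>\<infinity>j. h\<^sup>2 * h^CARD('n) * (\<phi> (lat h j) * \<psi> j)) = h\<^sup>2 * h^CARD('n) * \<psi> k"
    by (subst infsum_eq_single[of k]) (auto simp: bump)
  also have "(\<Sum>\<^sub>\<infinity>k'. (\<Sum>j\<in>{j. nbr j k'}. h^CARD('n) * (\<phi> (lat h k') * \<Phi> (lat h k', lat h j))))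
      = h^CARD('n) * (\<Sum>j\<in>{j. nbr j k}. \<Phi> (lat h k, lat h j))"
    by (subst infsum_eq_single[of k]) (auto simp: bump sum_distrib_left)
  finally have "\<psi> k = (\<Sum>j\<in>{j. nbr j k}. \<Phi> (lat h k, lat h j)) / h\<^sup>2"
    using h by (simp add: field_simps)
  then show ?thesis
    by (simp add: disc_lap_y_def sum_nbr lat_add_axis lat_diff_axis)
qed

section \<open>Cubes and their lower corners\<close>

definition lattice_index :: "real \<Rightarrow> real^'n \<Rightarrow> int^'n" where
  "lattice_index h x = (\<chi> i. \<lfloor>x $ i / h\<rfloor>)"

definition lattice_corner :: "real \<Rightarrow> real^'n \<Rightarrow> real^'n" where
  "lattice_corner h x = lat h (lattice_index h x)"

lemma mem_cube_iff:
  assumes "0 < h"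
  shows "x \<in> cube h k \<longleftrightarrow> k = lattice_index h x"
proof -
  have "x \<in> cube h k \<longleftrightarrow> (\<forall>i. of_int (k$i) \<le> x$i / h \<and> x$i / h < of_int (k$i) + 1)"
    using assms by (simp add: cube_def field_simps)
  also have "\<dots> \<longleftrightarrow> (\<forall>i. \<lfloor>x $ i / h\<rfloor> = k$i)"
    by (simp add: floor_eq_iff)
  finally show ?thesis
    by (auto simp: lattice_index_def vec_eq_iff)
qed

lemma Qfun_eq:
  assumes "0 < h"
  shows "Qfun h \<psi> x = \<psi> (lattice_index h x)"
  unfolding Qfun_def
  by (subst infsum_eq_single[of "lattice_index h x"]) (auto simp: mem_cube_iff[OF assms])

lemma Qfun_kirchhoff_div_eq:
  assumes "0 < h" "kirchhoff_div h \<Phi> \<psi>"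
  shows "Qfun h \<psi> x = disc_lap_y \<Phi> h (lattice_corner h x)"
  using kirchhoff_div_eq_disc_lap_y[OF assms] by (simp add: Qfun_eq[OF assms(1)] lattice_corner_def)

lemma abs_lattice_corner_component_diff_le:
  assumes "0 < h"
  shows "\<bar>lattice_corner h x $ m - x $ m\<bar> \<le> h"
proof -
  have "h * real_of_int \<lfloor>x$m / h\<rfloor> \<le> h * (x$m / h)"
    using assms by (intro mult_left_mono) auto
  moreover have "h * (x$m / h) < h * (real_of_int \<lfloor>x$m / h\<rfloor> + 1)"
    using assms by (intro mult_strict_left_mono) linarith+
  ultimately show ?thesis
    using assms by (simp add: lattice_corner_def lat_def lattice_index_def algebra_simps)
qed

lemma norm_lattice_corner_diff_le:
  fixes x :: "real^'n"
  assumes "0 < h"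
  shows "norm (lattice_corner h x - x) \<le> real CARD('n) * h"
proof -
  have "norm (lattice_corner h x - x) \<le> (\<Sum>m\<in>UNIV. \<bar>(lattice_corner h x - x) $ m\<bar>)"
    by (rule norm_le_l1_cart)
  also have "\<dots> \<le> (\<Sum>m\<in>(UNIV::'n set). h)"
    by (intro sum_mono) (use abs_lattice_corner_component_diff_le[OF assms] in simp)
  finally show ?thesis
    by simp
qed

lemma dist_lattice_corner_diag_le:
  fixes x :: "real^'n"
  assumes "0 < h" "\<bar>s\<bar> \<le> h"
  shows "dist (lattice_corner h x, lattice_corner h x + s *\<^sub>R axis i 1) (x, x) \<le> (2 * real CARD('n) + 1) * h"
proof -
  let ?d = "lattice_corner h x - x"
  have "dist (lattice_corner h x, lattice_corner h x + s *\<^sub>R axis i 1) (x, x) = norm (?d, ?d + s *\<^sub>R axis i 1)"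
    by (simp add: dist_norm algebra_simps)
  also have "\<dots> \<le> norm ?d + (norm ?d + norm (s *\<^sub>R axis i (1::real)))"
    by (meson add_left_mono norm_Pair_le norm_triangle_ineq order_trans)
  finally show ?thesis
    using norm_lattice_corner_diff_le[OF assms(1), of x] assms(2) by (simp add: algebra_simps)
qed

lemma lattice_corner_measurable: "lattice_corner h \<in> borel_measurable borel"
proof (rule borel_measurable_euclidean_space[THEN iffD2], intro ballI)
  fix b :: "real^'n"
  assume "b \<in> Basis"
  then obtain i where b: "b = axis i 1"
    by (auto simp: Basis_vec_def)
  have "(\<lambda>x. lattice_corner h x \<bullet> b) = (\<lambda>x. h * real_of_int \<lfloor>x$i / h\<rfloor>)"
    by (simp add: b inner_axis lattice_corner_def lat_def lattice_index_def)
  also have "\<dots> \<in> borel_measurable borel"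
    by measurable
  finally show "(\<lambda>x. lattice_corner h x \<bullet> b) \<in> borel_measurable borel" .
qed

lemma continuous_on_disc_lap_y:
  assumes "continuous_on UNIV \<Phi>"
  shows "continuous_on UNIV (disc_lap_y \<Phi> h)"
  unfolding disc_lap_y_def divide_inverse by (intro continuous_intros continuous_on_compose2[OF assms]) auto

section \<open>Second differences and second partial derivatives\<close>

lemma central_second_difference:
  fixes F F' F'' :: "real \<Rightarrow> real"
  assumes F': "\<And>t. (F has_real_derivative F' t) (at t)"
    and F'': "\<And>t. (F' has_real_derivative F'' t) (at t)"
    and h: "0 < h"
  obtains s1 s2 where "\<bar>s1\<bar> < h" "\<bar>s2\<bar> < h"
    "F h + F (-h) - 2 * F 0 = h\<^sup>2 / 2 * (F'' s1 + F'' s2)"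
proof -
  define diff :: "nat \<Rightarrow> real \<Rightarrow> real"
    where "diff m = (if m = 0 then F else if m = 1 then F' else F'')" for m
  have diff_Suc: "DERIV (diff m) t :> diff (Suc m) t" if "m < 2" for m t
    using that F' F'' by (auto simp: diff_def less_2_cases_iff)
  obtain s1 where s1: "0 < s1" "s1 < h"
    "F h = (\<Sum>m<2. diff m 0 / fact m * h ^ m) + diff 2 s1 / fact 2 * h\<^sup>2"
    using Maclaurin[of h 2 diff F] h diff_Suc by (auto simp: diff_def)
  obtain s2 where s2: "-h < s2" "s2 < 0"
    "F (-h) = (\<Sum>m<2. diff m 0 / fact m * (-h) ^ m) + diff 2 s2 / fact 2 * (-h)\<^sup>2"
    using Maclaurin_minus[of "-h" 2 diff F] h diff_Suc by (auto simp: diff_def)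
  have "F h + F (-h) - 2 * F 0 = h\<^sup>2 / 2 * (F'' s1 + F'' s2)"
    using s1(3) s2(3) by (simp add: diff_def numeral_2_eq_2 lessThan_Suc field_simps)
  with s1 s2 show ?thesis
    using that[of s1 s2] by auto
qed

lemma DERIV_along_line_shift:
  fixes A B :: "'a::real_vector \<Rightarrow> real"
  assumes "\<And>y. ((\<lambda>t. A (y + t *\<^sub>R v)) has_real_derivative B y) (at 0)"
  shows "((\<lambda>t. A (y + t *\<^sub>R v)) has_real_derivative B (y + s *\<^sub>R v)) (at s)"
proof -
  have "((\<lambda>t. A ((y + s *\<^sub>R v) + t *\<^sub>R v)) has_real_derivative B (y + s *\<^sub>R v)) (at 0)"
    using assms .
  then show ?thesis
    using DERIV_shift[of "\<lambda>t. A (y + t *\<^sub>R v)" _ 0 s] by (simp add: algebra_simps)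
qed

definition second_y_partials ::
    "((real^'n) \<times> (real^'n) \<Rightarrow> real) \<Rightarrow> ('n \<Rightarrow> (real^'n) \<times> (real^'n) \<Rightarrow> real)
      \<Rightarrow> ('n \<Rightarrow> (real^'n) \<times> (real^'n) \<Rightarrow> real) \<Rightarrow> bool" where
  "second_y_partials \<Phi> D1 D2 \<longleftrightarrow> continuous_on UNIV \<Phi> \<and>
     (\<forall>i x y. ((\<lambda>t. \<Phi> (x, y + t *\<^sub>R axis i 1)) has_real_derivative D1 i (x, y)) (at 0)) \<and>
     (\<forall>i x y. ((\<lambda>t. D1 i (x, y + t *\<^sub>R axis i 1)) has_real_derivative D2 i (x, y)) (at 0)) \<and>
     (\<forall>i. continuous_on UNIV (D2 i))"

lemma second_y_partials_DERIV:
  fixes \<Phi> :: "(real^'n) \<times> (real^'n) \<Rightarrow> real"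
  assumes "second_y_partials \<Phi> D1 D2"
  shows "((\<lambda>t. \<Phi> (x, y + t *\<^sub>R axis i 1)) has_real_derivative D1 i (x, y + s *\<^sub>R axis i 1)) (at s)"
    and "((\<lambda>t. D1 i (x, y + t *\<^sub>R axis i 1)) has_real_derivative D2 i (x, y + s *\<^sub>R axis i 1)) (at s)"
  using assms unfolding second_y_partials_def
  by (auto intro: DERIV_along_line_shift[of "\<lambda>y. \<Phi> (x, y)" _ "\<lambda>y. D1 i (x, y)"]
      DERIV_along_line_shift[of "\<lambda>y. D1 i (x, y)" _ "\<lambda>y. D2 i (x, y)"])

lemma lap_y_eq_sum_partials:
  fixes \<Phi> :: "(real^'n) \<times> (real^'n) \<Rightarrow> real"
  assumes D: "second_y_partials \<Phi> D1 D2"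
  shows "lap_y \<Phi> x = (\<Sum>i\<in>UNIV. D2 i (x, x))"
  unfolding lap_y_def
proof (rule sum.cong[OF refl])
  fix i
  have "deriv (\<lambda>t. \<Phi> (x, x + t *\<^sub>R axis i 1)) = (\<lambda>s. D1 i (x, x + s *\<^sub>R axis i 1))"
    using second_y_partials_DERIV(1)[OF D] by (intro ext DERIV_imp_deriv)
  moreover have "deriv (\<lambda>s. D1 i (x, x + s *\<^sub>R axis i 1)) 0 = D2 i (x, x)"
    using second_y_partials_DERIV(2)[OF D, where x = x and y = x and s = 0] by (intro DERIV_imp_deriv) simp
  ultimately show "(deriv ^^ 2) (\<lambda>t. \<Phi> (x, x + t *\<^sub>R axis i 1)) 0 = D2 i (x, x)"
    by (simp add: numeral_2_eq_2)
qed

lemma disc_lap_y_approx: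
  fixes \<Phi> :: "(real^'n) \<times> (real^'n) \<Rightarrow> real"
  assumes D: "second_y_partials \<Phi> D1 D2" and diag: "\<Phi> (p, p) = 0" and h: "0 < h"
    and near: "\<And>i s. \<bar>s\<bar> < h \<Longrightarrow> \<bar>D2 i (p, p + s *\<^sub>R axis i 1) - c i\<bar> \<le> \<epsilon>"
  shows "\<bar>disc_lap_y \<Phi> h p - (\<Sum>i\<in>UNIV. c i)\<bar> \<le> real CARD('n) * \<epsilon>"
proof -
  have summand: "\<bar>(\<Phi> (p, p + h *\<^sub>R axis i 1) + \<Phi> (p, p - h *\<^sub>R axis i 1)) / h\<^sup>2 - c i\<bar> \<le> \<epsilon>" for i
  proof -
    obtain s1 s2 where s: "\<bar>s1\<bar> < h" "\<bar>s2\<bar> < h"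
      "\<Phi> (p, p + h *\<^sub>R axis i 1) + \<Phi> (p, p + (-h) *\<^sub>R axis i 1) - 2 * \<Phi> (p, p + 0 *\<^sub>R axis i 1)
         = h\<^sup>2 / 2 * (D2 i (p, p + s1 *\<^sub>R axis i 1) + D2 i (p, p + s2 *\<^sub>R axis i 1))"
      using central_second_difference[OF second_y_partials_DERIV[OF D] h] by blast
    then have average: "(\<Phi> (p, p + h *\<^sub>R axis i 1) + \<Phi> (p, p - h *\<^sub>R axis i 1)) / h\<^sup>2 - c i
        = ((D2 i (p, p + s1 *\<^sub>R axis i 1) - c i) + (D2 i (p, p + s2 *\<^sub>R axis i 1) - c i)) / 2"
      using diag h by (simp add: field_simps)
    show ?thesis
      unfolding average using near[OF s(1), of i] near[OF s(2), of i] by (simp add: abs_le_iff)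
  qed
  have "\<bar>disc_lap_y \<Phi> h p - (\<Sum>i\<in>UNIV. c i)\<bar>
      = \<bar>\<Sum>i\<in>UNIV. (\<Phi> (p, p + h *\<^sub>R axis i 1) + \<Phi> (p, p - h *\<^sub>R axis i 1)) / h\<^sup>2 - c i\<bar>"
    by (simp add: disc_lap_y_def sum_divide_distrib sum_subtractf)
  also have "\<dots> \<le> (\<Sum>i\<in>UNIV. \<bar>(\<Phi> (p, p + h *\<^sub>R axis i 1) + \<Phi> (p, p - h *\<^sub>R axis i 1)) / h\<^sup>2 - c i\<bar>)"
    by (rule sum_abs)
  also have "\<dots> \<le> (\<Sum>i\<in>(UNIV::'n set). \<epsilon>)"
    by (intro sum_mono summand)
  finally show ?thesis
    by simp
qed

lemma blinfun_derivatives_along_line: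
  fixes g :: "'a::euclidean_space \<Rightarrow> real"
  assumes d: "\<forall>x. (g has_derivative blinfun_apply (g' x)) (at x)"
    and dd: "\<forall>x. (g' has_derivative blinfun_apply (g'' x)) (at x)"
  shows "((\<lambda>t. g (z + t *\<^sub>R v)) has_real_derivative g' z v) (at 0)"
    and "((\<lambda>t. g' (z + t *\<^sub>R v) v) has_real_derivative g'' z v v) (at 0)"
proof -
  have line: "((\<lambda>t::real. z + t *\<^sub>R v) has_derivative (\<lambda>t. t *\<^sub>R v)) (at 0)"
    by (auto intro!: derivative_eq_intros)
  have "((\<lambda>t. g (z + t *\<^sub>R v)) has_derivative (\<lambda>t. g' (z + 0 *\<^sub>R v) (t *\<^sub>R v))) (at 0)"
    by (rule has_derivative_compose[OF line]) (use d in simp)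
  moreover have "(\<lambda>t. t * g' z v) = (*) (g' z v)"
    by (auto simp: mult.commute)
  ultimately show "((\<lambda>t. g (z + t *\<^sub>R v)) has_real_derivative g' z v) (at 0)"
    by (simp add: has_field_derivative_def blinfun.scaleR_right)
  have "((\<lambda>t. g' (z + t *\<^sub>R v)) has_derivative (\<lambda>t. g'' (z + 0 *\<^sub>R v) (t *\<^sub>R v))) (at 0)"
    by (rule has_derivative_compose[OF line]) (use dd in simp)
  then have "((\<lambda>t. g' (z + t *\<^sub>R v) v) has_derivative (\<lambda>t. g'' z (t *\<^sub>R v) v)) (at 0)"
    by (auto intro!: derivative_eq_intros)
  moreover have "(\<lambda>t. t * g'' z v v) = (*) (g'' z v v)"
    by (auto simp: mult.commute)
  ultimately show "((\<lambda>t. g' (z + t *\<^sub>R v) v) has_real_derivative g'' z v v) (at 0)"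
    by (simp add: has_field_derivative_def blinfun.scaleR_right blinfun.scaleR_left)
qed

lemma C2_imp_second_y_partials:
  fixes \<Phi> :: "(real^'n) \<times> (real^'n) \<Rightarrow> real"
  assumes "C2 \<Phi>"
  obtains D1 D2 where "second_y_partials \<Phi> D1 D2"
proof -
  obtain \<Phi>' \<Phi>'' where d: "\<forall>x. (\<Phi> has_derivative blinfun_apply (\<Phi>' x)) (at x)"
      and dd: "\<forall>x. (\<Phi>' has_derivative blinfun_apply (\<Phi>'' x)) (at x)"
      and c: "continuous_on UNIV \<Phi>''"
    using assms unfolding C2_def by blast
  have line: "(x, y) + t *\<^sub>R (0, axis i 1) = (x, y + t *\<^sub>R axis i 1)" for x y :: "real^'n" and t i
    by simp
  have "second_y_partials \<Phi> (\<lambda>i z. \<Phi>' z (0, axis i 1)) (\<lambda>i z. \<Phi>'' z (0, axis i 1) (0, axis i 1))"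
    unfolding second_y_partials_def
  proof (intro conjI allI)
    show "continuous_on UNIV \<Phi>"
      using d by (intro has_derivative_continuous_on) auto
    show "continuous_on UNIV (\<lambda>z. \<Phi>'' z (0, axis i 1) (0, axis i 1))" for i
      by (intro continuous_intros c)
    fix i x y
    show "((\<lambda>t. \<Phi> (x, y + t *\<^sub>R axis i 1)) has_real_derivative \<Phi>' (x, y) (0, axis i 1)) (at 0)"
      using blinfun_derivatives_along_line(1)[OF d dd, of "(x, y)" "(0, axis i 1)"] by (simp add: line)
    show "((\<lambda>t. \<Phi>' (x, y + t *\<^sub>R axis i 1) (0, axis i 1)) has_real_derivative
        \<Phi>'' (x, y) (0, axis i 1) (0, axis i 1)) (at 0)"
      using blinfun_derivatives_along_line(2)[OF d dd, of "(x, y)" "(0, axis i 1)"] by (simp add: line)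
  qed
  then show ?thesis
    using that by blast
qed

lemma C2_imp_second_y_partials_increment:
  fixes f :: "real^'n \<Rightarrow> real"
  assumes "C2 f"
  obtains D1 D2 where "second_y_partials (\<lambda>(x, y). f y - f x) D1 D2"
proof -
  obtain f' f'' where d: "\<forall>x. (f has_derivative blinfun_apply (f' x)) (at x)"
      and dd: "\<forall>x. (f' has_derivative blinfun_apply (f'' x)) (at x)"
      and c: "continuous_on UNIV f''"
    using assms unfolding C2_def by blast
  have "continuous_on UNIV f"
    using d by (intro has_derivative_continuous_on) auto
  then have cont: "continuous_on UNIV (\<lambda>(x, y). f y - f x)"
    unfolding case_prod_beta
    by (intro continuous_intros continuous_on_compose2[OF \<open>continuous_on UNIV f\<close>]) auto
  have "second_y_partials (\<lambda>(x, y). f y - f x)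
      (\<lambda>i z. f' (snd z) (axis i 1)) (\<lambda>i z. f'' (snd z) (axis i 1) (axis i 1))"
    unfolding second_y_partials_def
  proof (intro conjI allI)
    show "continuous_on UNIV (\<lambda>z. f'' (snd z) (axis i 1) (axis i 1))" for i
      by (intro continuous_intros continuous_on_compose2[OF c]) auto
    fix i x y
    have "((\<lambda>t. f (y + t *\<^sub>R axis i 1) - f x) has_real_derivative f' y (axis i 1) - 0) (at 0)"
      using blinfun_derivatives_along_line(1)[OF d dd] by (intro DERIV_diff DERIV_const)
    then show "((\<lambda>t. (\<lambda>(x, y). f y - f x) (x, y + t *\<^sub>R axis i 1)) has_real_derivative
        f' (snd (x, y)) (axis i 1)) (at 0)"
      by simp
    show "((\<lambda>t. f' (snd (x, y + t *\<^sub>R axis i 1)) (axis i 1)) has_real_derivative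
        f'' (snd (x, y)) (axis i 1) (axis i 1)) (at 0)"
      using blinfun_derivatives_along_line(2)[OF d dd] by simp
  qed (fact cont)
  then show ?thesis
    using that by blast
qed

lemma deriv_diff_const: "deriv (\<lambda>t. g t - c) = deriv (g :: real \<Rightarrow> real)"
proof -
  have "((\<lambda>t. g t - c) has_real_derivative D) (at x) \<longleftrightarrow> (g has_real_derivative D) (at x)" for D x
  proof
    assume "((\<lambda>t. g t - c) has_real_derivative D) (at x)"
    from DERIV_add[OF this DERIV_const[of c]] show "(g has_real_derivative D) (at x)"
      by simp
  next
    assume "(g has_real_derivative D) (at x)"
    from DERIV_diff[OF this DERIV_const[of c]] show "((\<lambda>t. g t - c) has_real_derivative D) (at x)"
      by simp
  qed
  then show ?thesis
    unfolding deriv_def by simp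
qed

lemma lap_y_increment: "lap_y (\<lambda>(x, y). f y - f x) = lap f"
  by (intro ext) (simp add: lap_y_def lap_def numeral_2_eq_2 deriv_diff_const)

section \<open>Convergence of the difference quotients\<close>

lemma uniform_continuity_near_cball:
  fixes u :: "'a::{real_normed_vector, heine_borel} \<Rightarrow> 'b::metric_space"
  assumes "continuous_on UNIV u" "0 < \<epsilon>"
  obtains \<delta> where "0 < \<delta>" "\<And>a b. a \<in> cball 0 R \<Longrightarrow> dist b a < \<delta> \<Longrightarrow> dist (u b) (u a) < \<epsilon>"
proof -
  have "uniformly_continuous_on (cball 0 (R + 1)) u"
    using assms(1) by (intro compact_uniformly_continuous) (auto intro: continuous_on_subset)
  then obtain d where "0 < d" and d: "\<And>a b. a \<in> cball 0 (R + 1) \<Longrightarrow> b \<in> cball 0 (R + 1) \<Longrightarrow>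
      dist b a < d \<Longrightarrow> dist (u b) (u a) < \<epsilon>"
    using assms(2) unfolding uniformly_continuous_on_def by metis
  show ?thesis
  proof (rule that[of "min d 1"])
    fix a b :: 'a
    assume a: "a \<in> cball 0 R" and ab: "dist b a < min d 1"
    then have "b \<in> cball 0 (R + 1)"
      using norm_triangle_sub[of b a] by (simp add: dist_norm)
    then show "dist (u b) (u a) < \<epsilon>"
      using a ab by (intro d) auto
  qed (use \<open>0 < d\<close> in simp)
qed

lemma disc_lap_y_lattice_corner_uniform_limit:
  fixes \<Phi> :: "(real^'n) \<times> (real^'n) \<Rightarrow> real"
  assumes D: "second_y_partials \<Phi> D1 D2" and diag: "\<forall>x. \<Phi> (x, x) = 0"
  shows "uniform_limit (cball 0 R) (\<lambda>h x. disc_lap_y \<Phi> h (lattice_corner h x))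
           (\<lambda>x. \<Sum>i\<in>UNIV. D2 i (x, x)) (at_right 0)"
proof (rule uniform_limitI)
  fix e :: real
  assume "0 < e"
  define c where "c = 2 * real CARD('n) + 1"
  define \<epsilon> where "\<epsilon> = e / (2 * real CARD('n))"
  have "0 < \<epsilon>"
    using \<open>0 < e\<close> by (simp add: \<epsilon>_def)
  have "\<exists>\<delta>>0. \<forall>a\<in>cball 0 (2 * R). \<forall>b. dist b a < \<delta> \<longrightarrow> dist (D2 i b) (D2 i a) < \<epsilon>" for i
    using D \<open>0 < \<epsilon>\<close> unfolding second_y_partials_def
    by (metis uniform_continuity_near_cball)
  then obtain \<delta> where \<delta>: "\<And>i. 0 < \<delta> i"
    "\<And>i a b. a \<in> cball 0 (2 * R) \<Longrightarrow> dist b a < \<delta> i \<Longrightarrow> dist (D2 i b) (D2 i a) < \<epsilon>"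
    by metis
  have "((\<lambda>h. c * h) \<longlongrightarrow> 0) (at_right (0::real))"
    by (auto intro!: tendsto_eq_intros)
  then have "\<forall>\<^sub>F h in at_right 0. \<forall>i. c * h < \<delta> i"
    using \<delta>(1) by (intro eventually_all_finite order_tendstoD(2))
  then show "\<forall>\<^sub>F h in at_right 0. \<forall>x\<in>cball 0 R.
      dist (disc_lap_y \<Phi> h (lattice_corner h x)) (\<Sum>i\<in>UNIV. D2 i (x, x)) < e"
    using eventually_at_right_less[of 0]
  proof eventually_elim
    case (elim h)
    show ?case
    proof
      fix x :: "real^'n"
      assume "x \<in> cball 0 R"
      then have diag_in_cball: "(x, x) \<in> cball 0 (2 * R)"
        using norm_Pair_le[of x x] by simp
      have near: "\<bar>D2 i (lattice_corner h x, lattice_corner h x + s *\<^sub>R axis i 1) - D2 i (x, x)\<bar> \<le> \<epsilon>"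
        if "\<bar>s\<bar> < h" for i s
      proof -
        have "dist (lattice_corner h x, lattice_corner h x + s *\<^sub>R axis i 1) (x, x) < \<delta> i"
          using dist_lattice_corner_diag_le[OF elim(2), of s x i] that elim(1)
          unfolding c_def by (meson le_less_trans less_imp_le)
        then show ?thesis
          using \<delta>(2)[OF diag_in_cball] by (simp add: dist_real_def less_imp_le)
      qed
      have "\<bar>disc_lap_y \<Phi> h (lattice_corner h x) - (\<Sum>i\<in>UNIV. D2 i (x, x))\<bar> \<le> real CARD('n) * \<epsilon>"
        by (rule disc_lap_y_approx[OF D diag[rule_format] elim(2)]) (rule near)
      also have "\<dots> < e"
        using \<open>0 < e\<close> by (simp add: \<epsilon>_def)
      finally show "dist (disc_lap_y \<Phi> h (lattice_corner h x)) (\<Sum>i\<in>UNIV. D2 i (x, x)) < e"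
        by (simp add: dist_real_def)
    qed
  qed
qed

lemma integrable_on_UNIV_compact_support:
  fixes g :: "'a::euclidean_space \<Rightarrow> real"
  assumes "continuous_on UNIV g" "compact K" "\<And>x. x \<notin> K \<Longrightarrow> g x = 0"
  shows "g integrable_on UNIV"
proof -
  obtain a b where "K \<subseteq> cbox a b"
    using compact_imp_bounded[OF assms(2)] bounded_subset_cbox_symmetric by metis
  have "g integrable_on cbox a b"
    using assms(1) by (intro integrable_continuous continuous_on_subset[OF assms(1)]) auto
  then show ?thesis
    by (rule integrable_on_superset) (use \<open>K \<subseteq> cbox a b\<close> assms(3) in auto)
qed

lemma tendsto_integral_uniform_limit_compact_support:
  fixes g :: "'a \<Rightarrow> 'b::euclidean_space \<Rightarrow> real"
  assumes lim: "uniform_limit K g L F" and K: "compact K"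
    and \<phi>: "continuous_on UNIV \<phi>" "\<And>x. x \<notin> K \<Longrightarrow> \<phi> x = 0"
    and L: "continuous_on UNIV L" and g: "\<And>h. g h \<in> borel_measurable borel"
  shows "((\<lambda>h. integral UNIV (\<lambda>x. g h x * \<phi> x)) \<longlongrightarrow> integral UNIV (\<lambda>x. L x * \<phi> x)) F"
proof (rule tendstoI)
  fix e :: real
  assume "0 < e"
  have abs_\<phi>_int: "(\<lambda>x. \<bar>\<phi> x\<bar>) integrable_on UNIV"
    by (rule integrable_on_UNIV_compact_support[OF continuous_on_rabs[OF \<phi>(1)] K]) (simp add: \<phi>(2))
  have L\<phi>_int: "(\<lambda>x. L x * \<phi> x) integrable_on UNIV"
    by (rule integrable_on_UNIV_compact_support[OF continuous_on_mult[OF L \<phi>(1)] K]) (simp add: \<phi>(2))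
  define I where "I = integral UNIV (\<lambda>x. \<bar>\<phi> x\<bar>)"
  have "0 \<le> I"
    unfolding I_def by (rule integral_nonneg[OF abs_\<phi>_int]) simp
  define \<epsilon> where "\<epsilon> = e / (I + 1)"
  have "0 < \<epsilon>" "\<epsilon> * I < e"
    using \<open>0 < e\<close> \<open>0 \<le> I\<close> by (simp_all add: \<epsilon>_def field_simps)
  have "\<forall>\<^sub>F h in F. \<forall>x\<in>K. dist (g h x) (L x) < \<epsilon>"
    using lim \<open>0 < \<epsilon>\<close> by (rule uniform_limitD)
  then show "\<forall>\<^sub>F h in F. dist (integral UNIV (\<lambda>x. g h x * \<phi> x)) (integral UNIV (\<lambda>x. L x * \<phi> x)) < e"
  proof eventually_elim
    case (elim h)
    define r where "r x = (g h x - L x) * \<phi> x" for x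
    have bound: "\<bar>r x\<bar> \<le> \<epsilon> * \<bar>\<phi> x\<bar>" for x
    proof (cases "x \<in> K")
      case True
      then have "\<bar>g h x - L x\<bar> \<le> \<epsilon>"
        using elim by (simp add: dist_real_def less_imp_le)
      then show ?thesis
        unfolding r_def abs_mult by (rule mult_right_mono) simp
    qed (simp add: r_def \<phi>(2))
    have "r \<in> borel_measurable borel"
      unfolding r_def[abs_def]
      by (intro borel_measurable_times borel_measurable_diff g borel_measurable_continuous_onI L \<phi>(1))
    then have "r \<in> borel_measurable (lebesgue_on UNIV)"
      unfolding lebesgue_on_UNIV_eq by (intro measurable_completion) simp
    moreover have \<epsilon>\<phi>_int: "(\<lambda>x. \<epsilon> * \<bar>\<phi> x\<bar>) integrable_on UNIV"
      using integrable_on_cmult_left[OF abs_\<phi>_int] by simp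
    ultimately have r_int: "r integrable_on UNIV"
      by (rule measurable_bounded_by_integrable_imp_integrable_real[OF _ _ bound]) simp
    have "integral UNIV (\<lambda>x. g h x * \<phi> x) = integral UNIV (\<lambda>x. r x + L x * \<phi> x)"
      by (simp add: r_def algebra_simps)
    also have "\<dots> = integral UNIV r + integral UNIV (\<lambda>x. L x * \<phi> x)"
      by (rule integral_add[OF r_int L\<phi>_int])
    finally have "dist (integral UNIV (\<lambda>x. g h x * \<phi> x)) (integral UNIV (\<lambda>x. L x * \<phi> x))
        = \<bar>integral UNIV r\<bar>"
      by (simp add: dist_real_def)
    also have "\<dots> \<le> integral UNIV (\<lambda>x. \<epsilon> * \<bar>\<phi> x\<bar>)"
      using integral_norm_bound_integral[OF r_int \<epsilon>\<phi>_int] bound by simp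
    also have "\<dots> = \<epsilon> * I"
      by (simp add: I_def)
    finally show ?case
      using \<open>\<epsilon> * I < e\<close> by simp
  qed
qed

lemma kirchhoff_div_tendsto_lap_y:
  fixes \<Phi> :: "(real^'n) \<times> (real^'n) \<Rightarrow> real" and \<psi> :: "real \<Rightarrow> int^'n \<Rightarrow> real"
  assumes D: "second_y_partials \<Phi> D1 D2" and diag: "\<forall>x. \<Phi> (x, x) = 0"
    and div: "\<forall>h. 0 < h \<and> h < 1 \<longrightarrow> kirchhoff_div h \<Phi> (\<psi> h)" and "Cc \<phi>"
  shows "((\<lambda>h. integral UNIV (\<lambda>x. Qfun h (\<psi> h) x * \<phi> x))
           \<longlongrightarrow> integral UNIV (\<lambda>x. lap_y \<Phi> x * \<phi> x)) (at_right 0)"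
proof -
  obtain K where K: "compact K" "\<And>x. x \<notin> K \<Longrightarrow> \<phi> x = 0" and "continuous_on UNIV \<phi>"
    using \<open>Cc \<phi>\<close> unfolding Cc_def by blast
  obtain R where "K \<subseteq> cball 0 R"
    using bounded_subset_ballD[OF compact_imp_bounded[OF K(1)], of 0] ball_subset_cball by blast
  have cont_\<Phi>: "continuous_on UNIV \<Phi>" and cont_D2: "\<And>i. continuous_on UNIV (D2 i)"
    using D unfolding second_y_partials_def by blast+
  have "uniform_limit K (\<lambda>h x. disc_lap_y \<Phi> h (lattice_corner h x)) (\<lambda>x. \<Sum>i\<in>UNIV. D2 i (x, x)) (at_right 0)"
    using disc_lap_y_lattice_corner_uniform_limit[OF D diag] \<open>K \<subseteq> cball 0 R\<close> by (rule uniform_limit_on_subset)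
  moreover have "continuous_on UNIV (\<lambda>x. \<Sum>i\<in>UNIV. D2 i (x, x))"
    by (intro continuous_intros continuous_on_compose2[OF cont_D2]) auto
  moreover have "(\<lambda>x. disc_lap_y \<Phi> h (lattice_corner h x)) \<in> borel_measurable borel" for h
    using lattice_corner_measurable borel_measurable_continuous_onI[OF continuous_on_disc_lap_y[OF cont_\<Phi>]]
    by (rule measurable_compose)
  ultimately have "((\<lambda>h. integral UNIV (\<lambda>x. disc_lap_y \<Phi> h (lattice_corner h x) * \<phi> x))
      \<longlongrightarrow> integral UNIV (\<lambda>x. lap_y \<Phi> x * \<phi> x)) (at_right 0)"
    unfolding lap_y_eq_sum_partials[OF D]
    using tendsto_integral_uniform_limit_compact_support K \<open>continuous_on UNIV \<phi>\<close> by blast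
  moreover have "\<forall>\<^sub>F h in at_right 0. 0 < h \<and> h < (1::real)"
    unfolding eventually_at_right_field by (intro exI[of _ 1]) auto
  then have "\<forall>\<^sub>F h in at_right 0. integral UNIV (\<lambda>x. disc_lap_y \<Phi> h (lattice_corner h x) * \<phi> x)
      = integral UNIV (\<lambda>x. Qfun h (\<psi> h) x * \<phi> x)"
    by eventually_elim (use div Qfun_kirchhoff_div_eq[of _ \<Phi>] in simp)
  ultimately show ?thesis
    by (rule Lim_transform_eventually)
qed

theorem theorem10p2:
  fixes \<Phi> :: "(real^'n) \<times> (real^'n) \<Rightarrow> real"
    and \<psi> :: "real \<Rightarrow> int^'n \<Rightarrow> real"
    and f :: "real^'n \<Rightarrow> real"
    and \<psi>f :: "real \<Rightarrow> int^'n \<Rightarrow> real"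
  assumes "C2 \<Phi>"
    and "\<forall>x. \<Phi> (x, x) = 0"
    and "\<forall>h. 0 < h \<and> h < 1 \<longrightarrow> kirchhoff_div h \<Phi> (\<psi> h)"
    and "C2 f"
    and "\<forall>h. 0 < h \<and> h < 1 \<longrightarrow> kirchhoff_div h (\<lambda>(x, y). f y - f x) (\<psi>f h)"
  shows "(\<forall>\<phi>. Cc \<phi> \<longrightarrow>
           ((\<lambda>h. integral UNIV (\<lambda>x. Qfun h (\<psi> h) x * \<phi> x))
              \<longlongrightarrow> integral UNIV (\<lambda>x. lap_y \<Phi> x * \<phi> x)) (at_right 0))
       \<and> (\<forall>\<phi>. Cc \<phi> \<longrightarrow>
           ((\<lambda>h. integral UNIV (\<lambda>x. Qfun h (\<psi>f h) x * \<phi> x))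
              \<longlongrightarrow> integral UNIV (\<lambda>x. lap f x * \<phi> x)) (at_right 0))"
proof (intro conjI allI impI)
  fix \<phi> :: "real^'n \<Rightarrow> real"
  assume "Cc \<phi>"
  obtain D1 D2 where "second_y_partials \<Phi> D1 D2"
    using C2_imp_second_y_partials[OF assms(1)] .
  from kirchhoff_div_tendsto_lap_y[OF this assms(2,3) \<open>Cc \<phi>\<close>]
  show "((\<lambda>h. integral UNIV (\<lambda>x. Qfun h (\<psi> h) x * \<phi> x))
      \<longlongrightarrow> integral UNIV (\<lambda>x. lap_y \<Phi> x * \<phi> x)) (at_right 0)" .
next
  fix \<phi> :: "real^'n \<Rightarrow> real"
  assume "Cc \<phi>"
  obtain E1 E2 where "second_y_partials (\<lambda>(x, y). f y - f x) E1 E2"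
    using C2_imp_second_y_partials_increment[OF assms(4)] .
  from kirchhoff_div_tendsto_lap_y[OF this _ assms(5) \<open>Cc \<phi>\<close>]
  show "((\<lambda>h. integral UNIV (\<lambda>x. Qfun h (\<psi>f h) x * \<phi> x))
      \<longlongrightarrow> integral UNIV (\<lambda>x. lap f x * \<phi> x)) (at_right 0)"
    by (simp add: lap_y_increment)
qed

end
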